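(* Let $k\in\{-1,0,1\}$ and let $a$ be a regular scale factor (extended evenly to negative arguments) with finite particle horizon, i.e. $\int_0^\tau\frac{dt}{a(t)}<\infty$ for $\tau>0$. Then for every $\tau_0>0$, $\lim_{(\tau,t_0)\to(\tau_0,0)}a^2(t_0)S_k^2(\chi_{|t_0|}(\tau))=0$; consequently, defining $g_{\theta\theta}$ and $g_{\phi\phi}$ at points with $\rho=\rho_{\mathcal M_\tau}$ by these limits, $g_{\theta\theta}(\tau,\rho)$ and $g_{\phi\phi}(\tau,\rho,\theta)$ are continuous on $D_{\mathrm{polar}}$ and vanish at $(\tau,\rho_{\mathcal M_\tau})$.
   Context: A function $a:[0,\infty)\to[0,\infty)$ is a regular scale factor if: (a) $a(0)=0$; (b) $a$ is increasing and continuous on $[0,\infty)$, twice continuously differentiable on $(0,\infty)$, with an inverse function on $[0,\infty)$; (c) $\frac{a(t)\ddot a(t)}{\dot a(t)^2}\le1$ for all $t>0$ (presupposing $\dot a(t)\ne0$). Extend $a$ by $a(-t)=a(t)$. $S_1=\sin$, $S_0(\chi)=\chi$, $S_{-1}=\sinh$. For $0<s<\tau$, $\chi_s(\tau)=\int_s^\tau\frac{1}{a(t)}\frac{a(\tau)}{\sqrt{a^2(\tau)-a^2(t)}}dt$. For $\tau>0$, $\rho_{\mathcal M_\tau}=\int_0^\tau\frac{a(t)}{\sqrt{a^2(\tau)-a^2(t)}}dt$; for $0<\rho<2\rho_{\mathcal M_\tau}$, $t_0(\tau,\rho)$ is the unique $t_0\in(-\tau,\tau)$ with $\rho=\int_{t_0}^\tau\frac{a(t)}{\sqrt{a^2(\tau)-a^2(t)}}dt$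 ($t_0=0$ iff $\rho=\rho_{\mathcal M_\tau}$). Define $f(\tau,t_0)=\int_{t_0}^{\tau}\frac{\ddot a(t)}{\dot a(t)^2}\left(\frac{\sqrt{a^2(\tau)-a^2(t_0)}}{\sqrt{a^2(\tau)-a^2(t)}}-1\right)dt$ for $0\le t_0<\tau$, $f(\tau,t_0)=2f(\tau,0)-f(\tau,-t_0)$ for $-\tau<t_0<0$, and $g_{\tau\tau}(\tau,\rho)=-[1-\dot a(\tau)f(\tau,t_0(\tau,\rho))]^2$. Let $\rho_{\max}(\tau)=\inf\{\rho\in(0,2\rho_{\mathcal M_\tau}):g_{\tau\tau}(\tau,\rho)=0\}$ if this set is nonempty, else $2\rho_{\mathcal M_\tau}$. $D_{\mathrm{polar}}=\{(\tau,\rho,\theta,\phi):\tau>0,\ 0<\rho<\rho_{\max}(\tau),\ \theta\in I_\pi,\ \phi\in I_{2\pi}\}$, with $I_\pi,I_{2\pi}$ open intervals of lengths $\pi,2\pi$. For $t_0(\tau,\rho)\ne0$: $g_{\theta\theta}(\tau,\rho)=a^2(t_0)S_k^2(\chi_{|t_0|}(\tau))$ with $t_0=t_0(\tau,\rho)$, and $g_{\phi\phi}(\tau,\rho,\theta)=g_{\theta\theta}(\tau,\rho)\sin^2\theta$ (angular metric coefficients of the extended Robertson–Walker metric $ds^2=g_{\tau\tau}d\tau^2+d\rho^2+g_{\theta\theta}d\theta^2+g_{\phi\phi}d\phi^2$ in Fermi polar coordinates). *)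

theory Defs
  imports "HOL-Analysis.Analysis"
begin

text \<open>Regular scale factor (conditions (a)-(c)), for a function on the reals whose
  restriction to [0,oo) is the scale factor; the even extension is a separate hypothesis.\<close>
definition regular_scale_factor :: "(real \<Rightarrow> real) \<Rightarrow> bool" where
  "regular_scale_factor a \<longleftrightarrow>
     a 0 = 0 \<and>
     strict_mono_on {0..} a \<and>
     continuous_on {0..} a \<and>
     bij_betw a {0..} {0..} \<and>
     (\<forall>t>0. (a has_real_derivative deriv a t) (at t)) \<and>
     (\<forall>t>0. (deriv a has_real_derivative deriv (deriv a) t) (at t)) \<and>
     continuous_on {0<..} (deriv (deriv a)) \<and>
     (\<forall>t>0. deriv a t \<noteq> 0 \<and> a t * deriv (deriv a) t / (deriv a t)\<^sup>2 \<le> 1)"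

definition S :: "int \<Rightarrow> real \<Rightarrow> real" where
  "S k x = (if k = 1 then sin x else if k = 0 then x else sinh x)"

definition chi :: "(real \<Rightarrow> real) \<Rightarrow> real \<Rightarrow> real \<Rightarrow> real" where
  "chi a s \<tau> = integral {s..\<tau>} (\<lambda>t. (1 / a t) * (a \<tau> / sqrt ((a \<tau>)\<^sup>2 - (a t)\<^sup>2)))"

definition rhoM :: "(real \<Rightarrow> real) \<Rightarrow> real \<Rightarrow> real" where
  "rhoM a \<tau> = integral {0..\<tau>} (\<lambda>t. a t / sqrt ((a \<tau>)\<^sup>2 - (a t)\<^sup>2))"

definition tzero :: "(real \<Rightarrow> real) \<Rightarrow> real \<Rightarrow> real \<Rightarrow> real" where
  "tzero a \<tau> \<rho> = (THE t0. -\<tau> < t0 \<and> t0 < \<tau> \<and>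
      \<rho> = integral {t0..\<tau>} (\<lambda>t. a t / sqrt ((a \<tau>)\<^sup>2 - (a t)\<^sup>2)))"

definition fpos :: "(real \<Rightarrow> real) \<Rightarrow> real \<Rightarrow> real \<Rightarrow> real" where
  "fpos a \<tau> t0 = integral {t0..\<tau>} (\<lambda>t. deriv (deriv a) t / (deriv a t)\<^sup>2 *
      (sqrt ((a \<tau>)\<^sup>2 - (a t0)\<^sup>2) / sqrt ((a \<tau>)\<^sup>2 - (a t)\<^sup>2) - 1))"

definition fF :: "(real \<Rightarrow> real) \<Rightarrow> real \<Rightarrow> real \<Rightarrow> real" where
  "fF a \<tau> t0 = (if 0 \<le> t0 then fpos a \<tau> t0 else 2 * fpos a \<tau> 0 - fpos a \<tau> (- t0))"

definition g_tautau :: "(real \<Rightarrow> real) \<Rightarrow> real \<Rightarrow> real \<Rightarrow> real" where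
  "g_tautau a \<tau> \<rho> = - (1 - deriv a \<tau> * fF a \<tau> (tzero a \<tau> \<rho>))\<^sup>2"

definition rho_max :: "(real \<Rightarrow> real) \<Rightarrow> real \<Rightarrow> real" where
  "rho_max a \<tau> =
     (let Z = {\<rho>. 0 < \<rho> \<and> \<rho> < 2 * rhoM a \<tau> \<and> g_tautau a \<tau> \<rho> = 0}
      in if Z \<noteq> {} then Inf Z else 2 * rhoM a \<tau>)"

definition D_polar :: "(real \<Rightarrow> real) \<Rightarrow> real \<Rightarrow> real \<Rightarrow> (real \<times> real \<times> real \<times> real) set" where
  "D_polar a th0 ph0 = {(\<tau>, \<rho>, \<theta>, \<phi>). 0 < \<tau> \<and> 0 < \<rho> \<and> \<rho> < rho_max a \<tau> \<and>
      \<theta> \<in> {th0<..<th0 + pi} \<and> \<phi> \<in> {ph0<..<ph0 + 2 * pi}}"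

text \<open>g_thetatheta, extended at rho = rho_M by the value 0 (the limit in the theorem)\<close>
definition g_thth :: "int \<Rightarrow> (real \<Rightarrow> real) \<Rightarrow> real \<Rightarrow> real \<Rightarrow> real" where
  "g_thth k a \<tau> \<rho> = (if \<rho> = rhoM a \<tau> then 0 else
      (let t0 = tzero a \<tau> \<rho> in (a t0)\<^sup>2 * (S k (chi a \<bar>t0\<bar> \<tau>))\<^sup>2))"

definition g_phph :: "int \<Rightarrow> (real \<Rightarrow> real) \<Rightarrow> real \<Rightarrow> real \<Rightarrow> real \<Rightarrow> real" where
  "g_phph k a \<tau> \<rho> \<theta> = g_thth k a \<tau> \<rho> * (sin \<theta>)\<^sup>2"

end

theory Submission
  imports Defs
begin

text \<open>
  At \<open>\<rho> = \<rho>\<^sub>M\<close>, i.e. \<open>t\<^sub>0 = 0\<close>, the factor \<open>a(t\<^sub>0)\<^sup>2\<close> tends to 0 while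
  \<open>\<chi>\<^bsub>|t\<^sub>0|\<^esub>(\<tau>)\<close> stays bounded: splitting its integral at \<open>\<tau>\<^sub>0/2\<close>, the part near 0 is
  controlled by the finite particle horizon \<open>\<integral> dt/a\<close> and the part near \<open>\<tau>\<close> by \<open>\<rho>\<close>.
  Elsewhere \<open>g\<^sub>\<theta>\<^sub>\<theta>\<close> is a continuous function of \<open>(\<tau>, t\<^sub>0(\<tau>,\<rho>))\<close>.  The integrals defining
  \<open>\<rho>\<close> and \<open>\<chi>\<close> have a singularity of order \<open>(\<tau> - t) powr (-1/2)\<close> at \<open>t = \<tau>\<close>, which the
  substitution \<open>t = \<tau> - (\<tau> - t\<^sub>0)(1 - v)\<^sup>2\<close> removes, so they depend continuously on their
  parameters; and \<open>t\<^sub>0(\<tau>,\<rho>)\<close> is continuous as the inverse of the strictly decreasing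
  map \<open>t\<^sub>0 \<mapsto> \<rho>\<close>.
\<close>

lemma isCont_S: "isCont (S k) x"
proof -
  have "S k = (if k = 1 then sin else if k = 0 then (\<lambda>x. x) else sinh)"
    by (auto simp: fun_eq_iff S_def)
  then show ?thesis by (auto intro!: continuous_intros)
qed

lemma S_sq_le:
  assumes "0 \<le> x" "x \<le> M"
  shows "(S k x)\<^sup>2 \<le> 1 + M\<^sup>2 + (sinh M)\<^sup>2"
proof -
  have bounds: "(sin x)\<^sup>2 \<le> 1" "x\<^sup>2 \<le> M\<^sup>2" "(sinh x)\<^sup>2 \<le> (sinh M)\<^sup>2" "0 \<le> M\<^sup>2" "0 \<le> (sinh M)\<^sup>2"
    using assms by (auto simp: abs_square_le_1 intro: power_mono)
  have "(S k x)\<^sup>2 \<in> {(sin x)\<^sup>2, x\<^sup>2, (sinh x)\<^sup>2}" by (simp add: S_def)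
  then show ?thesis using bounds by (elim insertE emptyE) linarith+
qed

lemma rho_max_le: "rho_max a \<tau> \<le> 2 * rhoM a \<tau>"
proof -
  let ?Z = "{\<rho>. 0 < \<rho> \<and> \<rho> < 2 * rhoM a \<tau> \<and> g_tautau a \<tau> \<rho> = 0}"
  have "Inf ?Z \<le> 2 * rhoM a \<tau>" if "?Z \<noteq> {}"
    using that cInf_lower[of _ ?Z] by (force intro: bdd_belowI[of _ 0])
  then show ?thesis by (auto simp: rho_max_def Let_def)
qed

locale even_scale_factor =
  fixes a :: "real \<Rightarrow> real"
  assumes regular: "regular_scale_factor a"
    and even: "\<And>t. a (- t) = a t"
begin

abbreviation "a' \<equiv> deriv a"

lemma scale_zero [simp]: "a 0 = 0"
  using regular by (simp add: regular_scale_factor_def)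

lemma scale_abs: "a \<bar>t\<bar> = a t"
  by (cases "t \<ge> 0") (auto simp: even)

lemma scale_less: "\<bar>s\<bar> < \<bar>t\<bar> \<Longrightarrow> a s < a t"
  using regular scale_abs unfolding regular_scale_factor_def strict_mono_on_def
  by (metis abs_ge_zero atLeast_iff)

lemma scale_le: "\<bar>s\<bar> \<le> \<bar>t\<bar> \<Longrightarrow> a s \<le> a t"
  by (metis scale_abs scale_less order.order_iff_strict)

lemma scale_pos: "t \<noteq> 0 \<Longrightarrow> 0 < a t"
  using scale_less[of 0 t] by simp

lemma scale_nonneg: "0 \<le> a t"
  using scale_le[of 0 t] by simp

lemma scale_sq_le: "\<bar>s\<bar> \<le> \<bar>t\<bar> \<Longrightarrow> (a s)\<^sup>2 \<le> (a t)\<^sup>2"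
  by (simp add: power_mono scale_le scale_nonneg)

lemma scale_sq_less: "\<bar>s\<bar> < \<bar>t\<bar> \<Longrightarrow> (a s)\<^sup>2 < (a t)\<^sup>2"
  by (simp add: power_strict_mono scale_less scale_nonneg)

lemma continuous_on_scale: "continuous_on UNIV a"
proof -
  have "continuous_on {0..} a" using regular by (simp add: regular_scale_factor_def)
  then have "continuous_on UNIV (\<lambda>t. a \<bar>t\<bar>)"
    by (rule continuous_on_compose2[OF _ continuous_on_rabs[OF continuous_on_id]]) auto
  then show ?thesis by (simp add: scale_abs)
qed

lemma isCont_scale: "isCont a x"
  using continuous_on_scale by (simp add: continuous_on_eq_continuous_at)

lemma continuous_on_scale_compose [continuous_intros]:
  "continuous_on X f \<Longrightarrow> continuous_on X (\<lambda>x. a (f x))"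
  by (rule continuous_on_compose2[OF continuous_on_scale]) auto

lemma tendsto_scale [tendsto_intros]: "(f \<longlongrightarrow> l) F \<Longrightarrow> ((\<lambda>x. a (f x)) \<longlongrightarrow> a l) F"
  using isCont_scale isCont_tendsto_compose by blast

lemma borel_measurable_scale [measurable]: "a \<in> borel_measurable borel"
  by (rule borel_measurable_continuous_onI[OF continuous_on_scale])

lemma has_real_derivative_scale: "t > 0 \<Longrightarrow> (a has_real_derivative a' t) (at t)"
  using regular by (simp add: regular_scale_factor_def)

lemma isCont_deriv_scale: "t > 0 \<Longrightarrow> isCont a' t"
  using regular DERIV_isCont unfolding regular_scale_factor_def by blast

lemma deriv_scale_pos: "t > 0 \<Longrightarrow> a' t > 0"
proof (rule ccontr)
  assume t: "t > 0" and "\<not> a' t > 0"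
  moreover have "a' t \<noteq> 0" using regular t by (simp add: regular_scale_factor_def)
  ultimately have "a' t < 0" by auto
  from DERIV_neg_dec_right[OF has_real_derivative_scale[OF t] this] obtain d where
    "d > 0" "\<And>h. h > 0 \<Longrightarrow> h < d \<Longrightarrow> a t > a (t + h)" by auto
  from this(2)[of "d/2"] \<open>d > 0\<close> scale_less[of t "t + d/2"] t show False by auto
qed

text \<open>\<open>sq_slope\<close> is the difference quotient of \<open>a\<^sup>2\<close>. Its continuity and positivity on the
  wedge, diagonal included, make the singularity of \<open>1 / sqrt (a(\<tau>)\<^sup>2 - a(t)\<^sup>2)\<close> at
  \<open>t = \<tau>\<close> exactly of order \<open>(\<tau> - t) powr (-1/2)\<close>.\<close>

definition slope :: "real \<Rightarrow> real \<Rightarrow> real" where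
  "slope x y = (if x = y then a' x else (a x - a y) / (x - y))"

definition sq_slope :: "real \<Rightarrow> real \<Rightarrow> real" where
  "sq_slope x y = slope x y * (a x + a y)"

definition wedge :: "(real \<times> real) set" where
  "wedge = {(x, y). 0 < x \<and> - x < y \<and> y \<le> x}"

lemma sq_diff_eq_sq_slope: "(a x)\<^sup>2 - (a y)\<^sup>2 = (x - y) * sq_slope x y"
proof (cases "x = y")
  case False
  then have "x - y \<noteq> 0" by simp
  then show ?thesis by (simp add: sq_slope_def slope_def power2_eq_square field_simps)
qed (simp add: sq_slope_def)

lemma slope_pos: "(x, y) \<in> wedge \<Longrightarrow> 0 < slope x y"
  using deriv_scale_pos scale_less[of y x]
  by (cases "x = y") (auto simp: wedge_def slope_def)

lemma sq_slope_pos: "(x, y) \<in> wedge \<Longrightarrow> 0 < sq_slope x y"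
  using slope_pos[of x y] scale_pos[of x] scale_nonneg[of y]
  unfolding sq_slope_def wedge_def by (intro mult_pos_pos) auto

lemma slope_mean_value:
  assumes "0 < x" "0 < y"
  obtains z where "min x y \<le> z" "z \<le> max x y" "slope x y = a' z"
proof (cases x y rule: linorder_cases)
  case less
  with MVT2[OF less, of a a'] has_real_derivative_scale assms
  obtain z where "x < z" "z < y" "a y - a x = (y - x) * a' z" by force
  with less show ?thesis by (intro that[of z]) (auto simp: slope_def field_simps)
next
  case equal
  then show ?thesis by (intro that[of x]) (auto simp: slope_def)
next
  case greater
  with MVT2[OF greater, of a a'] has_real_derivative_scale assms
  obtain z where "y < z" "z < x" "a x - a y = (x - y) * a' z" by force
  with greater show ?thesis by (intro that[of z]) (auto simp: slope_def field_simps)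
qed

lemma isCont_slope_diagonal:
  assumes "0 < x0"
  shows "isCont (\<lambda>p. slope (fst p) (snd p)) (x0, x0)"
  unfolding continuous_at_eps_delta
proof (intro allI impI)
  fix e :: real assume "e > 0"
  with isCont_deriv_scale[OF assms] obtain d where d: "d > 0"
    "\<And>z. dist z x0 < d \<Longrightarrow> dist (a' z) (a' x0) < e"
    unfolding continuous_at_eps_delta by blast
  have "dist (slope x y) (a' x0) < e" if "dist (x, y) (x0, x0) < min d x0" for x y
  proof -
    have "dist x x0 < min d x0" "dist y x0 < min d x0"
      using that dist_fst_le[of "(x, y)" "(x0, x0)"] dist_snd_le[of "(x, y)" "(x0, x0)"] by auto
    then have "0 < x" "0 < y" and near: "\<And>z. min x y \<le> z \<Longrightarrow> z \<le> max x y \<Longrightarrow> dist z x0 < d"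
      by (auto simp: dist_real_def)
    obtain z where "min x y \<le> z" "z \<le> max x y" "slope x y = a' z"
      by (rule slope_mean_value[OF \<open>0 < x\<close> \<open>0 < y\<close>])
    then show ?thesis using d(2) near by metis
  qed
  then show "\<exists>d>0. \<forall>p. dist p (x0, x0) < d \<longrightarrow>
      dist (slope (fst p) (snd p)) (slope (fst (x0, x0)) (snd (x0, x0))) < e"
    using d(1) assms by (intro exI[of _ "min d x0"]) (auto simp: slope_def)
qed

lemma isCont_slope_off_diagonal:
  assumes "x0 \<noteq> y0"
  shows "isCont (\<lambda>p. slope (fst p) (snd p)) (x0, y0)"
proof -
  have "isCont (\<lambda>p. (a (fst p) - a (snd p)) / (fst p - snd p)) (x0, y0)"
    using assms by (intro continuous_intros isCont_o2[OF _ isCont_scale]) auto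
  moreover have "open {p :: real \<times> real. fst p \<noteq> snd p}"
    by (intro open_Collect_neq continuous_intros)
  then have "\<forall>\<^sub>F p in nhds (x0, y0).
      slope (fst p) (snd p) = (a (fst p) - a (snd p)) / (fst p - snd p)"
    using assms by (intro eventually_nhds_in_open[THEN eventually_mono]) (auto simp: slope_def)
  ultimately show ?thesis by (subst isCont_cong) auto
qed

lemma continuous_on_sq_slope: "continuous_on wedge (\<lambda>p. sq_slope (fst p) (snd p))"
proof -
  have "isCont (\<lambda>p. slope (fst p) (snd p)) (x, y)" if "(x, y) \<in> wedge" for x y
    using that isCont_slope_diagonal isCont_slope_off_diagonal
    by (cases "x = y") (auto simp: wedge_def)
  then have "continuous_on wedge (\<lambda>p. slope (fst p) (snd p))"
    by (intro continuous_at_imp_continuous_on) auto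
  then show ?thesis unfolding sq_slope_def by (intro continuous_intros)
qed

text \<open>\<open>t = root_subst \<tau> t\<^sub>0 v\<close> maps \<open>[0,1]\<close> onto \<open>[t\<^sub>0,\<tau>]\<close> with \<open>dt = 2(\<tau> - t\<^sub>0)(1 - v) dv\<close>
  and \<open>\<tau> - t = (\<tau> - t\<^sub>0)(1 - v)\<^sup>2\<close>; the transformed integrand \<open>regularized\<close> is continuous
  in \<open>(\<tau>, t\<^sub>0, v)\<close>.\<close>

definition root_subst :: "real \<Rightarrow> real \<Rightarrow> real \<Rightarrow> real" where
  "root_subst \<tau> t0 v = \<tau> - (\<tau> - t0) * (1 - v)\<^sup>2"

definition regularized :: "(real \<Rightarrow> real) \<Rightarrow> real \<Rightarrow> real \<Rightarrow> real \<Rightarrow> real" where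
  "regularized P \<tau> t0 v =
     2 * sqrt (\<tau> - t0) * P (root_subst \<tau> t0 v) / sqrt (sq_slope \<tau> (root_subst \<tau> t0 v))"

lemma root_subst_mem: "t0 \<le> \<tau> \<Longrightarrow> v \<in> {0..1} \<Longrightarrow> root_subst \<tau> t0 v \<in> {t0..\<tau>}"
proof -
  assume "t0 \<le> \<tau>" "v \<in> {0..1}"
  moreover from \<open>v \<in> {0..1}\<close> have "(1 - v)\<^sup>2 \<le> 1" by (auto simp: power_le_one)
  then have "(\<tau> - t0) * (1 - v)\<^sup>2 \<le> \<tau> - t0" using \<open>t0 \<le> \<tau>\<close> by (simp add: mult_left_le)
  ultimately show ?thesis by (auto simp: root_subst_def)
qed

lemma root_subst_wedge: "(\<tau>, t0) \<in> wedge \<Longrightarrow> v \<in> {0..1} \<Longrightarrow> (\<tau>, root_subst \<tau> t0 v) \<in> wedge"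
  using root_subst_mem[of t0 \<tau> v] by (auto simp: wedge_def)

lemma continuous_on_root_subst [continuous_intros]:
  "continuous_on X f \<Longrightarrow> continuous_on X g \<Longrightarrow> continuous_on X h \<Longrightarrow>
    continuous_on X (\<lambda>x. root_subst (f x) (g x) (h x))"
  unfolding root_subst_def by (intro continuous_intros)

lemma root_subst_singular_integrand:
  assumes "(\<tau>, t0) \<in> wedge" "t0 < \<tau>" "v \<in> {0..<1}"
  shows "P (root_subst \<tau> t0 v) / sqrt ((a \<tau>)\<^sup>2 - (a (root_subst \<tau> t0 v))\<^sup>2)
           * (2 * (\<tau> - t0) * (1 - v)) = regularized P \<tau> t0 v"
proof -
  define t where "t = root_subst \<tau> t0 v"
  define q where "q = sqrt (sq_slope \<tau> t)"
  define r where "r = sqrt (\<tau> - t0)"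
  have "(\<tau>, t) \<in> wedge" using root_subst_wedge assms by (auto simp: t_def)
  then have q: "q > 0" using sq_slope_pos by (simp add: q_def)
  have r: "r > 0" "r * r = \<tau> - t0" using assms by (auto simp: r_def)
  have "(a \<tau>)\<^sup>2 - (a t)\<^sup>2 = (\<tau> - t0) * (1 - v)\<^sup>2 * sq_slope \<tau> t"
    by (simp add: sq_diff_eq_sq_slope t_def root_subst_def)
  then have "sqrt ((a \<tau>)\<^sup>2 - (a t)\<^sup>2) = r * (1 - v) * q"
    using assms by (simp add: real_sqrt_mult q_def r_def)
  then have "P t / sqrt ((a \<tau>)\<^sup>2 - (a t)\<^sup>2) * (2 * (\<tau> - t0) * (1 - v))
      = P t / (r * (1 - v) * q) * (2 * (r * r) * (1 - v))"
    by (simp only: r)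
  also have "\<dots> = 2 * r * P t / q" using q r assms by (simp add: field_simps)
  finally show ?thesis by (simp add: regularized_def t_def q_def r_def)
qed

lemma continuous_on_regularized:
  assumes "continuous_on X f" "continuous_on X g" "continuous_on X h"
    and "\<And>x. x \<in> X \<Longrightarrow> (f x, g x) \<in> wedge \<and> h x \<in> {0..1}"
    and "continuous_on X (\<lambda>x. P x (root_subst (f x) (g x) (h x)))"
  shows "continuous_on X (\<lambda>x. regularized (P x) (f x) (g x) (h x))"
proof -
  let ?m = "\<lambda>x. (f x, root_subst (f x) (g x) (h x))"
  have "continuous_on X ?m" using assms(1-3) by (intro continuous_intros)
  moreover have m: "?m x \<in> wedge" if "x \<in> X" for x
    using assms(4)[OF that] root_subst_wedge by blast
  ultimately have "continuous_on X (\<lambda>x. sq_slope (fst (?m x)) (snd (?m x)))"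
    by (intro continuous_on_compose2[OF continuous_on_sq_slope]) auto
  moreover have "sq_slope (fst (?m x)) (snd (?m x)) \<noteq> 0" if "x \<in> X" for x
    using m[OF that] sq_slope_pos by (metis less_irrefl prod.collapse)
  ultimately show ?thesis
    unfolding regularized_def using assms by (auto intro!: continuous_intros)
qed

text \<open>The integrand is unbounded at \<open>\<tau>\<close>, so the change of variables is done for
  nonnegative Lebesgue integrals.\<close>

lemma nn_integral_singular_eq_regularized:
  assumes wedge: "(\<tau>, t0) \<in> wedge" and lt: "t0 < \<tau>"
    and cont: "continuous_on {t0..\<tau>} P" and nonneg: "\<And>t. t \<in> {t0..\<tau>} \<Longrightarrow> 0 \<le> P t"
    and f: "f = (\<lambda>t. P t / sqrt ((a \<tau>)\<^sup>2 - (a t)\<^sup>2))"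
  shows "(\<lambda>t. f t * indicator {t0..\<tau>} t) \<in> borel_measurable borel"
    and "(\<integral>\<^sup>+t. f t * indicator {t0..\<tau>} t \<partial>lborel) = ennreal (integral {0..1} (regularized P \<tau> t0))"
proof -
  define h where "h = regularized P \<tau> t0"
  have "continuous_on {0..1} h" unfolding h_def
    using wedge root_subst_mem lt
    by (intro continuous_on_regularized continuous_on_compose2[OF cont] continuous_intros) auto
  then have hI: "(h has_integral integral {0..1} h) {0..1}"
    using integrable_continuous_real by blast
  have h_nonneg: "0 \<le> h v" if "v \<in> {0..1}" for v
    using nonneg[OF root_subst_mem[OF _ that]] lt sq_slope_pos[OF root_subst_wedge[OF wedge that]]
    by (auto simp: h_def regularized_def)
  have "(\<lambda>t. indicator {t0..\<tau>} t *\<^sub>R P t) \<in> borel_measurable borel"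
    by (rule borel_measurable_continuous_on_indicator[OF _ cont]) simp
  then have "(\<lambda>t. indicator {t0..\<tau>} t *\<^sub>R P t / sqrt ((a \<tau>)\<^sup>2 - (a t)\<^sup>2))
      \<in> borel_measurable borel"
    by measurable
  then show f_meas: "(\<lambda>t. f t * indicator {t0..\<tau>} t) \<in> borel_measurable borel"
    by (simp add: f mult.commute)
  have ends: "root_subst \<tau> t0 0 = t0" "root_subst \<tau> t0 1 = \<tau>" by (simp_all add: root_subst_def)
  have "(\<integral>\<^sup>+t. f t * indicator {root_subst \<tau> t0 0..root_subst \<tau> t0 1} t \<partial>lborel)
      = (\<integral>\<^sup>+v. f (root_subst \<tau> t0 v) * (2 * (\<tau> - t0) * (1 - v)) * indicator {0..1} v \<partial>lborel)"
  proof (rule nn_integral_substitution)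
    show "set_borel_measurable borel {root_subst \<tau> t0 0..root_subst \<tau> t0 1} f"
      using f_meas by (simp add: ends set_borel_measurable_def mult.commute)
    show "(root_subst \<tau> t0 has_real_derivative 2 * (\<tau> - t0) * (1 - v)) (at v)" for v
      unfolding root_subst_def
      by (auto intro!: derivative_eq_intros simp: power2_eq_square algebra_simps)
  qed (use lt in \<open>auto intro!: continuous_intros\<close>)
  then have "(\<integral>\<^sup>+t. f t * indicator {t0..\<tau>} t \<partial>lborel)
      = (\<integral>\<^sup>+v. f (root_subst \<tau> t0 v) * (2 * (\<tau> - t0) * (1 - v)) * indicator {0..1} v \<partial>lborel)"
    by (simp only: ends)
  also have "\<dots> = (\<integral>\<^sup>+v. ennreal (h v) * indicator {0..1} v \<partial>lborel)"
    using AE_lborel_singleton[of 1]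
    by (intro nn_integral_cong_AE, eventually_elim)
      (use root_subst_singular_integrand[OF wedge lt] in \<open>auto simp: f h_def indicator_def\<close>)
  also have "\<dots> = ennreal (integral {0..1} h)"
    by (rule nn_integral_has_integral_lebesgue'[OF h_nonneg hI])
  finally show "(\<integral>\<^sup>+t. f t * indicator {t0..\<tau>} t \<partial>lborel) = ennreal (integral {0..1} (regularized P \<tau> t0))"
    by (simp add: h_def)
qed

lemma has_integral_regularized:
  assumes wedge: "(\<tau>, t0) \<in> wedge"
    and cont: "continuous_on {t0..\<tau>} P" and nonneg: "\<And>t. t \<in> {t0..\<tau>} \<Longrightarrow> 0 \<le> P t"
  shows "((\<lambda>t. P t / sqrt ((a \<tau>)\<^sup>2 - (a t)\<^sup>2)) has_integral integral {0..1} (regularized P \<tau> t0))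
           {t0..\<tau>}"
proof (cases "t0 = \<tau>")
  case True
  have "regularized P \<tau> \<tau> = (\<lambda>v. 0)" by (simp add: regularized_def fun_eq_iff)
  then show ?thesis using True has_integral_refl(2)[of _ \<tau>] by simp
next
  case False
  with wedge have lt: "t0 < \<tau>" by (simp add: wedge_def)
  define f where "f = (\<lambda>t. P t / sqrt ((a \<tau>)\<^sup>2 - (a t)\<^sup>2))"
  define I where "I = integral {0..1} (regularized P \<tau> t0)"
  have "0 \<le> I"
    using lt root_subst_mem nonneg sq_slope_pos[OF root_subst_wedge[OF wedge]] unfolding I_def
    by (intro integral_nonneg continuous_on_regularized integrable_continuous_real
        continuous_on_compose2[OF cont] continuous_intros)
      (auto simp: regularized_def wedge intro!: divide_nonneg_pos mult_nonneg_nonneg)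
  moreover have "0 \<le> f t" if "t \<in> {t0..\<tau>}" for t
    using that nonneg[OF that] scale_sq_le[of t \<tau>] wedge
    by (auto simp: f_def wedge_def intro!: divide_nonneg_nonneg)
  ultimately have "((\<lambda>t. f t * indicator {t0..\<tau>} t) has_integral I) UNIV"
    using nn_integral_singular_eq_regularized[OF wedge lt cont nonneg f_def]
    by (intro nn_integral_has_integral) (auto simp: indicator_def I_def)
  moreover have "(\<lambda>t. f t * indicator {t0..\<tau>} t) = (\<lambda>t. if t \<in> {t0..\<tau>} then f t else 0)"
    by (auto simp: indicator_def)
  ultimately show ?thesis
    by (simp only: has_integral_restrict_UNIV f_def I_def)
qed

lemma
  fixes P :: "real \<Rightarrow> real \<Rightarrow> real"
  assumes Y: "Y \<subseteq> wedge"
    and Z: "\<And>\<tau> t0 t. (\<tau>, t0) \<in> Y \<Longrightarrow> t \<in> {t0..\<tau>} \<Longrightarrow> (\<tau>, t) \<in> Z"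
    and cont: "continuous_on Z (\<lambda>p. P (fst p) (snd p))"
    and nonneg: "\<And>p. p \<in> Z \<Longrightarrow> 0 \<le> P (fst p) (snd p)"
  shows has_integral_singular_integral:
      "(\<tau>, t0) \<in> Y \<Longrightarrow> ((\<lambda>t. P \<tau> t / sqrt ((a \<tau>)\<^sup>2 - (a t)\<^sup>2)) has_integral
          integral {0..1} (regularized (P \<tau>) \<tau> t0)) {t0..\<tau>}"
    and continuous_on_singular_integral:
      "continuous_on Y
         (\<lambda>p. integral {snd p..fst p} (\<lambda>t. P (fst p) t / sqrt ((a (fst p))\<^sup>2 - (a t)\<^sup>2)))"
proof -
  show hI: "((\<lambda>t. P \<tau> t / sqrt ((a \<tau>)\<^sup>2 - (a t)\<^sup>2)) has_integral
      integral {0..1} (regularized (P \<tau>) \<tau> t0)) {t0..\<tau>}" if "(\<tau>, t0) \<in> Y" for \<tau> t0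
  proof (rule has_integral_regularized)
    show "continuous_on {t0..\<tau>} (P \<tau>)"
      using Z[OF that]
      by (intro continuous_on_compose2[OF cont, of "{t0..\<tau>}" "\<lambda>t. (\<tau>, t)", simplified]
          continuous_intros) auto
  qed (use that Y Z nonneg in force)+
  define m where "m = (\<lambda>x::(real \<times> real) \<times> real.
      (fst (fst x), root_subst (fst (fst x)) (snd (fst x)) (snd x)))"
  have "continuous_on (Y \<times> {0..1}) m" unfolding m_def by (intro continuous_intros)
  moreover have "m x \<in> Z" if "x \<in> Y \<times> {0..1}" for x
    using that Y Z[of "fst (fst x)" "snd (fst x)"]
      root_subst_mem[of "snd (fst x)" "fst (fst x)" "snd x"]
    by (auto simp: m_def wedge_def mem_Times_iff subset_iff)
  then have "m ` (Y \<times> {0..1}) \<subseteq> Z" by blast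
  ultimately have "continuous_on (Y \<times> {0..1}) (\<lambda>x. P (fst (m x)) (snd (m x)))"
    by (rule continuous_on_compose2[OF cont])
  then have "continuous_on (Y \<times> {0..1})
      (\<lambda>x. regularized (P (fst (fst x))) (fst (fst x)) (snd (fst x)) (snd x))"
    using Y by (intro continuous_on_regularized continuous_intros) (auto simp: m_def)
  then have "continuous_on Y (\<lambda>p. integral (cbox 0 1) (regularized (P (fst p)) (fst p) (snd p)))"
    by (intro integral_continuous_on_param) (simp add: case_prod_beta cbox_interval)
  moreover have "integral (cbox 0 1) (regularized (P (fst p)) (fst p) (snd p))
      = integral {snd p..fst p} (\<lambda>t. P (fst p) t / sqrt ((a (fst p))\<^sup>2 - (a t)\<^sup>2))" if "p \<in> Y" for p
    using integral_unique[OF hI[of "fst p" "snd p"]] that by (simp add: cbox_interval)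
  ultimately show "continuous_on Y
      (\<lambda>p. integral {snd p..fst p} (\<lambda>t. P (fst p) t / sqrt ((a (fst p))\<^sup>2 - (a t)\<^sup>2)))"
    by (rule continuous_on_eq)
qed

abbreviation rho_int :: "real \<Rightarrow> real \<Rightarrow> real" where
  "rho_int \<tau> t0 \<equiv> integral {t0..\<tau>} (\<lambda>t. a t / sqrt ((a \<tau>)\<^sup>2 - (a t)\<^sup>2))"

lemma
  shows rho_integrable:
      "(\<tau>, t0) \<in> wedge \<Longrightarrow> (\<lambda>t. a t / sqrt ((a \<tau>)\<^sup>2 - (a t)\<^sup>2)) integrable_on {t0..\<tau>}"
    and continuous_on_rho_int: "continuous_on wedge (\<lambda>p. rho_int (fst p) (snd p))"
proof -
  have "continuous_on UNIV (\<lambda>p :: real \<times> real. a (snd p))" by (intro continuous_intros)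
  note singular = has_integral_singular_integral[of wedge UNIV "\<lambda>_ t. a t", OF _ _ this]
    continuous_on_singular_integral[of wedge UNIV "\<lambda>_ t. a t", OF _ _ this]
  show "(\<tau>, t0) \<in> wedge \<Longrightarrow> (\<lambda>t. a t / sqrt ((a \<tau>)\<^sup>2 - (a t)\<^sup>2)) integrable_on {t0..\<tau>}"
    using singular(1) scale_nonneg by blast
  show "continuous_on wedge (\<lambda>p. rho_int (fst p) (snd p))"
    using singular(2) scale_nonneg by blast
qed

lemma isCont_rho_int_tau:
  assumes "\<bar>u\<bar> < \<tau>"
  shows "isCont (\<lambda>\<tau>. rho_int \<tau> u) \<tau>"
proof -
  have "open {\<tau>. \<bar>u\<bar> < \<tau>}" by (simp add: open_Collect_less)
  moreover have "continuous_on {\<tau>. \<bar>u\<bar> < \<tau>} (\<lambda>\<tau>. rho_int (fst (\<tau>, u)) (snd (\<tau>, u)))"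
    by (rule continuous_on_compose2[OF continuous_on_rho_int])
      (auto intro!: continuous_intros simp: wedge_def)
  ultimately show ?thesis using assms by (simp add: continuous_on_eq_continuous_at)
qed

lemma rho_int_nonneg_integrand: "\<bar>t\<bar> \<le> \<tau> \<Longrightarrow> 0 \<le> a t / sqrt ((a \<tau>)\<^sup>2 - (a t)\<^sup>2)"
  using scale_sq_le[of t \<tau>] scale_nonneg[of t] by (intro divide_nonneg_nonneg) auto

lemma rho_int_split:
  assumes "(\<tau>, t1) \<in> wedge" "t1 \<le> t2" "t2 \<le> \<tau>"
  shows "rho_int \<tau> t1 = integral {t1..t2} (\<lambda>t. a t / sqrt ((a \<tau>)\<^sup>2 - (a t)\<^sup>2)) + rho_int \<tau> t2"
  using Henstock_Kurzweil_Integration.integral_combine[OF assms(2,3) rho_integrable[OF assms(1)]]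
  by (rule sym)

lemma rho_int_antimono:
  assumes "(\<tau>, t1) \<in> wedge" "t1 \<le> t2" "t2 \<le> \<tau>"
  shows "rho_int \<tau> t2 \<le> rho_int \<tau> t1"
proof -
  have "(\<lambda>t. a t / sqrt ((a \<tau>)\<^sup>2 - (a t)\<^sup>2)) integrable_on {t1..t2}"
    using assms(3) by (intro integrable_on_subinterval[OF rho_integrable[OF assms(1)]]) auto
  moreover have "\<bar>t\<bar> \<le> \<tau>" if "t \<in> {t1..t2}" for t
    using that assms by (auto simp: wedge_def)
  ultimately have "0 \<le> integral {t1..t2} (\<lambda>t. a t / sqrt ((a \<tau>)\<^sup>2 - (a t)\<^sup>2))"
    by (intro integral_nonneg rho_int_nonneg_integrand) auto
  then show ?thesis using rho_int_split[OF assms] by linarith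
qed

lemma rho_int_pos_increment:
  assumes "\<bar>t1\<bar> < \<tau>" "\<bar>t2\<bar> < \<tau>" "t1 < t2"
  shows "0 < integral {t1..t2} (\<lambda>t. a t / sqrt ((a \<tau>)\<^sup>2 - (a t)\<^sup>2))"
proof -
  let ?f = "\<lambda>t. a t / sqrt ((a \<tau>)\<^sup>2 - (a t)\<^sup>2)"
  have inside: "\<bar>t\<bar> < \<tau>" if "t \<in> {t1..t2}" for t
    using that assms by auto
  have "sqrt ((a \<tau>)\<^sup>2 - (a t)\<^sup>2) \<noteq> 0" if "t \<in> {t1..t2}" for t
    using scale_sq_less[of t \<tau>] inside[OF that] by simp
  then have cont: "continuous_on {t1..t2} ?f" by (intro continuous_intros) auto
  have nonneg: "0 \<le> ?f t" if "t \<in> {t1..t2}" for t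
    using inside[OF that] by (intro rho_int_nonneg_integrand) simp
  obtain x where x: "x \<in> {t1..t2}" "x \<noteq> 0"
  proof (cases "t1 = 0")
    case True
    then show ?thesis using that[of t2] assms(3) by auto
  next
    case False
    then show ?thesis using that[of t1] assms(3) by auto
  qed
  then have "0 < ?f x"
    using scale_pos[of x] scale_sq_less[of x \<tau>] inside[OF x(1)] by (intro divide_pos_pos) auto
  then have "integral {t1..t2} ?f \<noteq> 0"
    using integral_eq_0_iff[OF cont assms(3) nonneg] x(1) by force
  moreover have "0 \<le> integral {t1..t2} ?f"
    using nonneg integrable_continuous_real[OF cont] by (intro integral_nonneg) auto
  ultimately show ?thesis by linarith
qed

lemma rho_int_strict_antimono:
  assumes "(\<tau>, t1) \<in> wedge" "t1 < t2" "t2 \<le> \<tau>"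
  shows "rho_int \<tau> t2 < rho_int \<tau> t1"
proof -
  define m where "m = (t1 + t2) / 2"
  have "\<bar>t1\<bar> < \<tau>" "\<bar>m\<bar> < \<tau>" "t1 < m" "m \<le> t2" using assms by (auto simp: m_def wedge_def)
  then have "rho_int \<tau> m < rho_int \<tau> t1"
    using rho_int_split[OF assms(1), of m] rho_int_pos_increment[of t1 \<tau> m] by linarith
  moreover have "rho_int \<tau> t2 \<le> rho_int \<tau> m"
    using \<open>\<bar>m\<bar> < \<tau>\<close> \<open>m \<le> t2\<close> assms by (intro rho_int_antimono) (auto simp: wedge_def)
  ultimately show ?thesis by linarith
qed

lemma rho_int_reflect:
  assumes "0 \<le> s" "s < \<tau>"
  shows "rho_int \<tau> (- s) = 2 * rho_int \<tau> 0 - rho_int \<tau> s"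
proof -
  have "(\<tau>, - s) \<in> wedge" "(\<tau>, 0) \<in> wedge" using assms by (auto simp: wedge_def)
  then have "rho_int \<tau> (- s) = integral {- s..0} (\<lambda>t. a t / sqrt ((a \<tau>)\<^sup>2 - (a t)\<^sup>2)) + rho_int \<tau> 0"
    and "rho_int \<tau> 0 = integral {0..s} (\<lambda>t. a t / sqrt ((a \<tau>)\<^sup>2 - (a t)\<^sup>2)) + rho_int \<tau> s"
    using assms by (auto intro!: rho_int_split)
  moreover have "integral {- s..0} (\<lambda>t. a t / sqrt ((a \<tau>)\<^sup>2 - (a t)\<^sup>2))
      = integral {0..s} (\<lambda>t. a t / sqrt ((a \<tau>)\<^sup>2 - (a t)\<^sup>2))"
    using Henstock_Kurzweil_Integration.integral_reflect_real
        [of s 0 "\<lambda>t. a t / sqrt ((a \<tau>)\<^sup>2 - (a t)\<^sup>2)"]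
    by (simp add: even)
  ultimately show ?thesis by linarith
qed

definition rho_domain :: "(real \<times> real) set" where
  "rho_domain = {(\<tau>, \<rho>). 0 < \<tau> \<and> 0 < \<rho> \<and> \<rho> < 2 * rhoM a \<tau>}"

lemma continuous_on_rho_int_t0:
  assumes "0 < \<tau>"
  shows "continuous_on {0..\<tau>} (rho_int \<tau>)"
proof -
  have "continuous_on {0..\<tau>} (\<lambda>t. rho_int (fst (\<tau>, t)) (snd (\<tau>, t)))"
    using assms by (intro continuous_on_compose2[OF continuous_on_rho_int])
      (auto intro!: continuous_intros simp: wedge_def)
  then show ?thesis by simp
qed

lemma rho_int_attains:
  assumes "0 < \<tau>" "0 < \<rho>" "\<rho> < 2 * rho_int \<tau> 0"
  obtains t where "\<bar>t\<bar> < \<tau>" "rho_int \<tau> t = \<rho>"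
proof (cases "\<rho> \<le> rho_int \<tau> 0")
  case True
  then obtain t where "0 \<le> t" "t \<le> \<tau>" "rho_int \<tau> t = \<rho>"
    using IVT2'[of "rho_int \<tau>" \<tau> \<rho> 0, OF _ True _ continuous_on_rho_int_t0] assms by auto
  moreover from this have "t \<noteq> \<tau>" using assms by auto
  ultimately show ?thesis using that[of t] by auto
next
  case False
  then obtain s where s: "0 \<le> s" "s \<le> \<tau>" "rho_int \<tau> s = 2 * rho_int \<tau> 0 - \<rho>"
    using IVT2'[of "rho_int \<tau>" \<tau> "2 * rho_int \<tau> 0 - \<rho>" 0, OF _ _ _ continuous_on_rho_int_t0] assms
    by auto
  moreover from this have "s \<noteq> \<tau>" using assms by auto
  ultimately show ?thesis using that[of "- s"] rho_int_reflect[of s \<tau>] by auto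
qed

lemma rho_int_inj:
  assumes "\<bar>t1\<bar> < \<tau>" "\<bar>t2\<bar> < \<tau>" "rho_int \<tau> t1 = rho_int \<tau> t2"
  shows "t1 = t2"
  using rho_int_strict_antimono[of \<tau> t1 t2] rho_int_strict_antimono[of \<tau> t2 t1] assms
  by (cases t1 t2 rule: linorder_cases) (auto simp: wedge_def abs_less_iff)

lemma tzero_rho_int:
  assumes "\<bar>t\<bar> < \<tau>"
  shows "tzero a \<tau> (rho_int \<tau> t) = t"
  unfolding tzero_def
proof (rule the_equality)
  show "- \<tau> < t \<and> t < \<tau> \<and> rho_int \<tau> t = rho_int \<tau> t" using assms by linarith
next
  fix s assume "- \<tau> < s \<and> s < \<tau> \<and> rho_int \<tau> t = rho_int \<tau> s"
  then show "s = t" using rho_int_inj[of s \<tau> t] assms by auto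
qed

lemma tzero_rhoM: "0 < \<tau> \<Longrightarrow> tzero a \<tau> (rhoM a \<tau>) = 0"
  using tzero_rho_int[of 0 \<tau>] by (simp add: rhoM_def)

lemma tzero_in_domain:
  assumes "(\<tau>, \<rho>) \<in> rho_domain"
  shows "\<bar>tzero a \<tau> \<rho>\<bar> < \<tau>" "rho_int \<tau> (tzero a \<tau> \<rho>) = \<rho>"
proof -
  obtain t where "\<bar>t\<bar> < \<tau>" "rho_int \<tau> t = \<rho>"
    using assms rho_int_attains[of \<tau> \<rho>] by (auto simp: rho_domain_def rhoM_def)
  then show "\<bar>tzero a \<tau> \<rho>\<bar> < \<tau>" "rho_int \<tau> (tzero a \<tau> \<rho>) = \<rho>"
    using tzero_rho_int by auto
qed

lemma tzero_between:
  assumes "(\<tau>, \<rho>) \<in> rho_domain" "\<bar>u\<bar> < \<tau>" "\<bar>w\<bar> < \<tau>" "rho_int \<tau> w < \<rho>" "\<rho> < rho_int \<tau> u"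
  shows "u < tzero a \<tau> \<rho> \<and> tzero a \<tau> \<rho> < w"
proof -
  define t where "t = tzero a \<tau> \<rho>"
  have t: "\<bar>t\<bar> < \<tau>" "rho_int \<tau> t = \<rho>" using tzero_in_domain assms(1) by (auto simp: t_def)
  have "u < t"
  proof (rule ccontr)
    assume "\<not> u < t"
    then have "rho_int \<tau> u \<le> rho_int \<tau> t"
      using t assms by (intro rho_int_antimono) (auto simp: wedge_def)
    then show False using t assms by simp
  qed
  moreover have "t < w"
  proof (rule ccontr)
    assume "\<not> t < w"
    then have "rho_int \<tau> t \<le> rho_int \<tau> w"
      using t assms by (intro rho_int_antimono) (auto simp: wedge_def)
    then show False using t assms by simp
  qed
  ultimately show ?thesis by (simp add: t_def)
qed

lemma eventually_tzero_between:
  assumes p: "(\<tau>1, \<rho>1) \<in> rho_domain"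
    and uw: "u < tzero a \<tau>1 \<rho>1" "tzero a \<tau>1 \<rho>1 < w" "\<bar>u\<bar> < \<tau>1" "\<bar>w\<bar> < \<tau>1"
  shows "\<forall>\<^sub>F p in at (\<tau>1, \<rho>1) within rho_domain.
           u < tzero a (fst p) (snd p) \<and> tzero a (fst p) (snd p) < w"
proof -
  let ?F = "at (\<tau>1, \<rho>1) within rho_domain"
  define t1 where "t1 = tzero a \<tau>1 \<rho>1"
  have t1: "\<bar>t1\<bar> < \<tau>1" "rho_int \<tau>1 t1 = \<rho>1" using tzero_in_domain[OF p] by (auto simp: t1_def)
  have "\<rho>1 < rho_int \<tau>1 u"
    using rho_int_strict_antimono[of \<tau>1 u t1] t1 uw by (auto simp: t1_def wedge_def abs_less_iff)
  moreover have "rho_int \<tau>1 w < \<rho>1"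
    using rho_int_strict_antimono[of \<tau>1 t1 w] t1 uw by (auto simp: t1_def wedge_def abs_less_iff)
  moreover have fst: "(fst \<longlongrightarrow> \<tau>1) ?F" and snd: "(snd \<longlongrightarrow> \<rho>1) ?F"
    using tendsto_fst[OF tendsto_ident_at] tendsto_snd[OF tendsto_ident_at] by fastforce+
  have lim: "((\<lambda>p. rho_int (fst p) v - snd p) \<longlongrightarrow> rho_int \<tau>1 v - \<rho>1) ?F" if "\<bar>v\<bar> < \<tau>1" for v
    using isCont_tendsto_compose[OF isCont_rho_int_tau[OF that] fst] snd by (rule tendsto_diff)
  ultimately have "\<forall>\<^sub>F p in ?F. snd p < rho_int (fst p) u" "\<forall>\<^sub>F p in ?F. rho_int (fst p) w < snd p"
    using order_tendstoD(1)[OF lim[OF uw(3)], of 0] order_tendstoD(2)[OF lim[OF uw(4)], of 0]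
    by simp_all
  moreover have "\<forall>\<^sub>F p in ?F. \<bar>u\<bar> < fst p" "\<forall>\<^sub>F p in ?F. \<bar>w\<bar> < fst p"
    using uw by (auto intro: order_tendstoD[OF fst])
  moreover have "\<forall>\<^sub>F p in ?F. p \<in> rho_domain" by (simp add: eventually_at_filter)
  ultimately show ?thesis
    by eventually_elim (use tzero_between in fastforce)
qed

lemma continuous_on_tzero: "continuous_on rho_domain (\<lambda>p. tzero a (fst p) (snd p))"
  unfolding continuous_on_def
proof (intro ballI tendstoI)
  fix p :: "real \<times> real" and e :: real
  assume "p \<in> rho_domain" "0 < e"
  then obtain \<tau>1 \<rho>1 where p: "p = (\<tau>1, \<rho>1)" "(\<tau>1, \<rho>1) \<in> rho_domain"
    by (metis surj_pair)
  define t1 where "t1 = tzero a \<tau>1 \<rho>1"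
  define d where "d = min e ((\<tau>1 - \<bar>t1\<bar>) / 2)"
  have "\<bar>t1\<bar> < \<tau>1" using tzero_in_domain(1)[OF p(2)] by (simp add: t1_def)
  moreover have "0 < d" "d \<le> e" "d \<le> (\<tau>1 - \<bar>t1\<bar>) / 2"
    using calculation \<open>0 < e\<close> by (auto simp: d_def min_def)
  ultimately have "0 < d" "d \<le> e" "\<bar>t1 - d\<bar> < \<tau>1" "\<bar>t1 + d\<bar> < \<tau>1"
    using abs_ge_self[of t1] abs_ge_minus_self[of t1] by (auto simp: abs_less_iff)
  then have "\<forall>\<^sub>F q in at p within rho_domain.
      t1 - d < tzero a (fst q) (snd q) \<and> tzero a (fst q) (snd q) < t1 + d"
    unfolding p(1) by (intro eventually_tzero_between[OF p(2)]) (auto simp: t1_def)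
  then show "\<forall>\<^sub>F q in at p within rho_domain.
      dist (tzero a (fst q) (snd q)) (tzero a (fst p) (snd p)) < e"
    by eventually_elim (use \<open>d \<le> e\<close> in \<open>auto simp: p t1_def dist_real_def\<close>)
qed

abbreviation chi_integrand :: "real \<Rightarrow> real \<Rightarrow> real" where
  "chi_integrand \<tau> t \<equiv> (1 / a t) * (a \<tau> / sqrt ((a \<tau>)\<^sup>2 - (a t)\<^sup>2))"

lemma chi_integrand_eq: "chi_integrand \<tau> = (\<lambda>t. a \<tau> / a t / sqrt ((a \<tau>)\<^sup>2 - (a t)\<^sup>2))"
  by (simp add: fun_eq_iff)

lemma
  shows chi_integrable: "0 < s \<Longrightarrow> s < \<tau> \<Longrightarrow> chi_integrand \<tau> integrable_on {s..\<tau>}"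
    and continuous_on_chi: "continuous_on {(\<tau>, s). 0 < s \<and> s < \<tau>} (\<lambda>p. chi a (snd p) (fst p))"
proof -
  define Y where "Y = {(\<tau>, s :: real). 0 < s \<and> s < \<tau>}"
  define Z where "Z = {(\<tau> :: real, t :: real). 0 < t}"
  have Y: "Y \<subseteq> wedge" by (auto simp: Y_def wedge_def)
  have Z: "\<And>\<tau> t0 t. (\<tau>, t0) \<in> Y \<Longrightarrow> t \<in> {t0..\<tau>} \<Longrightarrow> (\<tau>, t) \<in> Z"
    by (auto simp: Y_def Z_def)
  have cont: "continuous_on Z (\<lambda>p. a (fst p) / a (snd p))"
    using scale_pos by (intro continuous_intros) (auto simp: Z_def less_imp_neq[symmetric])
  have nonneg: "0 \<le> a (fst p) / a (snd p)" for p
    using scale_nonneg by simp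
  have "\<And>\<tau> s. (\<tau>, s) \<in> Y \<Longrightarrow> chi_integrand \<tau> integrable_on {s..\<tau>}"
    using has_integral_singular_integral[where P="\<lambda>\<tau> t. a \<tau> / a t", OF Y _ cont nonneg] Z
    unfolding chi_integrand_eq by blast
  then show "chi_integrand \<tau> integrable_on {s..\<tau>}" if "0 < s" "s < \<tau>" for s \<tau>
    using that by (auto simp: Y_def)
  have "continuous_on Y (\<lambda>p. integral {snd p..fst p} (chi_integrand (fst p)))"
    using continuous_on_singular_integral[where P="\<lambda>\<tau> t. a \<tau> / a t", OF Y _ cont nonneg] Z
    unfolding chi_integrand_eq by blast
  then show "continuous_on {(\<tau>, s). 0 < s \<and> s < \<tau>} (\<lambda>p. chi a (snd p) (fst p))"
    by (simp add: chi_def Y_def)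
qed

lemma chi_integrand_nonneg: "\<bar>t\<bar> \<le> \<tau> \<Longrightarrow> 0 \<le> chi_integrand \<tau> t"
  using scale_sq_le[of t \<tau>] scale_nonneg[of t] scale_nonneg[of \<tau>]
  by (intro mult_nonneg_nonneg divide_nonneg_nonneg) auto

lemma chi_nonneg: "0 < s \<Longrightarrow> s < \<tau> \<Longrightarrow> 0 \<le> chi a s \<tau>"
  unfolding chi_def using chi_integrable chi_integrand_nonneg by (intro integral_nonneg) auto

lemma chi_split:
  assumes "0 < s" "s \<le> c" "c < \<tau>"
  shows "chi a s \<tau> = integral {s..c} (chi_integrand \<tau>) + integral {c..\<tau>} (chi_integrand \<tau>)"
  unfolding chi_def using assms chi_integrable[of s \<tau>]
  by (intro Henstock_Kurzweil_Integration.integral_combine[symmetric]) auto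

lemma chi_head_bound:
  assumes "0 < s" "s \<le> c" "c < \<tau>1" "\<tau>1 \<le> \<tau>"
    and horizon: "(\<lambda>t. 1 / a t) integrable_on {0..c}"
  shows "integral {s..c} (chi_integrand \<tau>)
           \<le> a \<tau> / sqrt ((a \<tau>1)\<^sup>2 - (a c)\<^sup>2) * integral {0..c} (\<lambda>t. 1 / a t)"
proof -
  define K where "K = a \<tau> / sqrt ((a \<tau>1)\<^sup>2 - (a c)\<^sup>2)"
  have gap: "0 < (a \<tau>1)\<^sup>2 - (a c)\<^sup>2" using scale_sq_less[of c \<tau>1] assms by simp
  have K: "0 \<le> K" using gap scale_nonneg[of \<tau>] by (simp add: K_def)
  have int_sc: "(\<lambda>t. 1 / a t) integrable_on {s..c}" "(\<lambda>t. 1 / a t) integrable_on {0..s}"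
    using assms by (intro integrable_on_subinterval[OF horizon]; simp)+
  have "chi_integrand \<tau> integrable_on {s..c}"
    using assms by (intro integrable_on_subinterval[OF chi_integrable[of s \<tau>]]) auto
  moreover have "chi_integrand \<tau> t \<le> K * (1 / a t)" if "t \<in> {s..c}" for t
  proof -
    have "\<bar>t\<bar> \<le> \<bar>c\<bar>" "\<bar>\<tau>1\<bar> \<le> \<bar>\<tau>\<bar>" using that assms by auto
    then have "(a \<tau>1)\<^sup>2 - (a c)\<^sup>2 \<le> (a \<tau>)\<^sup>2 - (a t)\<^sup>2"
      using scale_sq_le[of t c] scale_sq_le[of \<tau>1 \<tau>] by linarith
    then have "a \<tau> / sqrt ((a \<tau>)\<^sup>2 - (a t)\<^sup>2) \<le> K"
      unfolding K_def using gap scale_nonneg[of \<tau>] by (intro divide_left_mono) auto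
    moreover have "0 \<le> 1 / a t" using scale_nonneg[of t] by simp
    ultimately have "(1 / a t) * (a \<tau> / sqrt ((a \<tau>)\<^sup>2 - (a t)\<^sup>2)) \<le> (1 / a t) * K"
      by (rule mult_left_mono)
    then show ?thesis by (simp only: mult.commute[of K])
  qed
  ultimately have "integral {s..c} (chi_integrand \<tau>) \<le> integral {s..c} (\<lambda>t. K * (1 / a t))"
    using integrable_on_mult_right[OF int_sc(1)] by (intro integral_le) auto
  also have "\<dots> = K * integral {s..c} (\<lambda>t. 1 / a t)"
    by (rule Henstock_Kurzweil_Integration.integral_mult_right)
  also have "\<dots> \<le> K * integral {0..c} (\<lambda>t. 1 / a t)"
  proof (rule mult_left_mono[OF _ K])
    have "integral {0..s} (\<lambda>t. 1 / a t) + integral {s..c} (\<lambda>t. 1 / a t)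
        = integral {0..c} (\<lambda>t. 1 / a t)"
      using assms by (intro Henstock_Kurzweil_Integration.integral_combine[OF _ _ horizon]) auto
    moreover have "0 \<le> integral {0..s} (\<lambda>t. 1 / a t)"
      using int_sc(2) scale_nonneg by (intro integral_nonneg) auto
    ultimately show "integral {s..c} (\<lambda>t. 1 / a t) \<le> integral {0..c} (\<lambda>t. 1 / a t)" by linarith
  qed
  finally show ?thesis by (simp add: K_def)
qed

lemma chi_tail_bound:
  assumes "0 < c" "c < \<tau>"
  shows "integral {c..\<tau>} (chi_integrand \<tau>) \<le> a \<tau> / (a c)\<^sup>2 * rho_int \<tau> c"
proof -
  have "chi_integrand \<tau> t \<le> a \<tau> / (a c)\<^sup>2 * (a t / sqrt ((a \<tau>)\<^sup>2 - (a t)\<^sup>2))" if "t \<in> {c..\<tau>}" for t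
  proof -
    have "0 < a c" "a c \<le> a t" using scale_pos[of c] scale_le[of c t] that assms by auto
    then have "1 / a t \<le> a t / (a c)\<^sup>2"
      by (simp add: field_simps power2_eq_square mult_mono)
    moreover have "0 \<le> a \<tau> / sqrt ((a \<tau>)\<^sup>2 - (a t)\<^sup>2)"
      using scale_sq_le[of t \<tau>] scale_nonneg[of \<tau>] that assms by (intro divide_nonneg_nonneg) auto
    ultimately have "chi_integrand \<tau> t \<le> a t / (a c)\<^sup>2 * (a \<tau> / sqrt ((a \<tau>)\<^sup>2 - (a t)\<^sup>2))"
      by (rule mult_right_mono)
    also have "\<dots> = a \<tau> / (a c)\<^sup>2 * (a t / sqrt ((a \<tau>)\<^sup>2 - (a t)\<^sup>2))"
      by (simp only: times_divide_times_eq mult.commute)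
    finally show ?thesis .
  qed
  moreover have w: "(\<tau>, c) \<in> wedge" using assms by (simp add: wedge_def)
  ultimately have "integral {c..\<tau>} (chi_integrand \<tau>)
      \<le> integral {c..\<tau>} (\<lambda>t. a \<tau> / (a c)\<^sup>2 * (a t / sqrt ((a \<tau>)\<^sup>2 - (a t)\<^sup>2)))"
    by (intro integral_le[OF chi_integrable[OF assms]
          integrable_on_mult_right[OF rho_integrable[OF w]]]) auto
  then show ?thesis by (simp only: Henstock_Kurzweil_Integration.integral_mult_right)
qed

lemma chi_bounded_near:
  assumes "0 < \<tau>0" and horizon: "(\<lambda>t. 1 / a t) integrable_on {0..\<tau>0 / 2}"
  obtains M where "\<And>s \<tau>. 0 < s \<Longrightarrow> s < \<tau>0 / 2 \<Longrightarrow> \<tau> \<in> {3 * \<tau>0 / 4..2 * \<tau>0} \<Longrightarrow> chi a s \<tau> \<le> M"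
proof -
  define c where "c = \<tau>0 / 2"
  define T where "T = {3 * \<tau>0 / 4..2 * \<tau>0}"
  have "continuous_on T (\<lambda>\<tau>. rho_int (fst (\<tau>, c)) (snd (\<tau>, c)))"
    using assms
    by (intro continuous_on_compose2[OF continuous_on_rho_int])
      (auto intro!: continuous_intros simp: T_def c_def wedge_def)
  then obtain B where B: "\<And>\<tau>. \<tau> \<in> T \<Longrightarrow> norm (rho_int \<tau> c) \<le> B"
    using continuous_on_compact_bound[of T "\<lambda>\<tau>. rho_int \<tau> c"] by (auto simp: T_def)
  define I where "I = integral {0..c} (\<lambda>t. 1 / a t)"
  have I: "0 \<le> I" unfolding I_def c_def using horizon scale_nonneg by (intro integral_nonneg) auto
  define M where
    "M = a (2 * \<tau>0) / sqrt ((a (3 * \<tau>0 / 4))\<^sup>2 - (a c)\<^sup>2) * I + a (2 * \<tau>0) / (a c)\<^sup>2 * B"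
  show ?thesis
  proof (rule that[of M])
    fix s \<tau> assume s: "0 < s" "s < \<tau>0 / 2" and \<tau>: "\<tau> \<in> {3 * \<tau>0 / 4..2 * \<tau>0}"
    have c: "s \<le> c" "c < 3 * \<tau>0 / 4" "0 < c" "c < \<tau>" using s \<tau> assms by (auto simp: c_def)
    have a\<tau>: "0 \<le> a \<tau>" "a \<tau> \<le> a (2 * \<tau>0)" using scale_nonneg scale_le[of \<tau> "2 * \<tau>0"] \<tau> assms by auto
    have "integral {s..c} (chi_integrand \<tau>) \<le> a \<tau> / sqrt ((a (3 * \<tau>0 / 4))\<^sup>2 - (a c)\<^sup>2) * I"
      using chi_head_bound[of s c "3 * \<tau>0 / 4" \<tau>] c s \<tau> horizon by (auto simp: I_def c_def)
    also have "\<dots> \<le> a (2 * \<tau>0) / sqrt ((a (3 * \<tau>0 / 4))\<^sup>2 - (a c)\<^sup>2) * I"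
      using a\<tau> I scale_sq_le[of c "3 * \<tau>0 / 4"] c by (intro mult_right_mono divide_right_mono) auto
    finally have head: "integral {s..c} (chi_integrand \<tau>)
        \<le> a (2 * \<tau>0) / sqrt ((a (3 * \<tau>0 / 4))\<^sup>2 - (a c)\<^sup>2) * I" .
    have "0 \<le> rho_int \<tau> c" "rho_int \<tau> c \<le> B"
      using rho_int_antimono[of \<tau> c \<tau>] B[of \<tau>] c \<tau> by (auto simp: T_def wedge_def)
    then have "integral {c..\<tau>} (chi_integrand \<tau>) \<le> a (2 * \<tau>0) / (a c)\<^sup>2 * B"
      using chi_tail_bound[of c \<tau>] c a\<tau>
      by (smt (verit) divide_right_mono mult_mono zero_le_power2 divide_nonneg_nonneg)
    with head show "chi a s \<tau> \<le> M" using chi_split[of s c \<tau>] s c by (simp add: M_def)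
  qed
qed

definition angular_factor :: "int \<Rightarrow> real \<Rightarrow> real \<Rightarrow> real" where
  "angular_factor k \<tau> t0 = (a t0)\<^sup>2 * (S k (chi a \<bar>t0\<bar> \<tau>))\<^sup>2"

lemma g_thth_eq_angular_factor:
  "(\<tau>, \<rho>) \<in> rho_domain \<Longrightarrow> g_thth k a \<tau> \<rho> = angular_factor k \<tau> (tzero a \<tau> \<rho>)"
  using tzero_rhoM[of \<tau>] by (auto simp: g_thth_def angular_factor_def rho_domain_def Let_def)

lemma D_polar_subset_rho_domain: "(\<lambda>x. (fst x, fst (snd x))) ` D_polar a th0 ph0 \<subseteq> rho_domain"
proof (rule image_subsetI)
  fix x assume "x \<in> D_polar a th0 ph0"
  then show "(fst x, fst (snd x)) \<in> rho_domain"
    using rho_max_le[of a "fst x"] by (auto simp: D_polar_def rho_domain_def)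
qed

definition open_wedge :: "(real \<times> real) set" where
  "open_wedge = {(\<tau>, t). 0 < \<tau> \<and> \<bar>t\<bar> < \<tau>}"

end

locale finite_horizon = even_scale_factor +
  assumes horizon: "\<And>\<tau>. 0 < \<tau> \<Longrightarrow> (\<lambda>t. 1 / a t) integrable_on {0..\<tau>}"
begin

lemma angular_factor_bounded_near:
  assumes "0 < \<tau>0"
  obtains K where "\<And>\<tau> t. \<bar>t\<bar> < \<tau>0 / 2 \<Longrightarrow> \<tau> \<in> {3 * \<tau>0 / 4..2 * \<tau>0} \<Longrightarrow>
      0 \<le> angular_factor k \<tau> t \<and> angular_factor k \<tau> t \<le> K * (a t)\<^sup>2"
proof -
  obtain M where M: "\<And>s \<tau>. 0 < s \<Longrightarrow> s < \<tau>0 / 2 \<Longrightarrow> \<tau> \<in> {3 * \<tau>0 / 4..2 * \<tau>0} \<Longrightarrow> chi a s \<tau> \<le> M"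
    using chi_bounded_near[OF assms horizon] assms by auto
  show ?thesis
  proof (rule that[of "1 + M\<^sup>2 + (sinh M)\<^sup>2"])
    fix \<tau> t assume t: "\<bar>t\<bar> < \<tau>0 / 2" and \<tau>: "\<tau> \<in> {3 * \<tau>0 / 4..2 * \<tau>0}"
    show "0 \<le> angular_factor k \<tau> t \<and> angular_factor k \<tau> t \<le> (1 + M\<^sup>2 + (sinh M)\<^sup>2) * (a t)\<^sup>2"
    proof (cases "t = 0")
      case False
      then have "0 \<le> chi a \<bar>t\<bar> \<tau>" "chi a \<bar>t\<bar> \<tau> \<le> M"
        using chi_nonneg[of "\<bar>t\<bar>" \<tau>] M[of "\<bar>t\<bar>" \<tau>] t \<tau> by auto
      then have "(S k (chi a \<bar>t\<bar> \<tau>))\<^sup>2 \<le> 1 + M\<^sup>2 + (sinh M)\<^sup>2" by (rule S_sq_le)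
      then show ?thesis
        unfolding angular_factor_def by (simp add: mult.commute mult_left_mono)
    qed (simp add: angular_factor_def)
  qed
qed

lemma angular_factor_tendsto_zero:
  assumes "0 < \<tau>0"
  shows "((\<lambda>p. angular_factor k (fst p) (snd p)) \<longlongrightarrow> 0) (at (\<tau>0, 0) within X)"
proof -
  obtain K where K: "\<And>\<tau> t. \<bar>t\<bar> < \<tau>0 / 2 \<Longrightarrow> \<tau> \<in> {3 * \<tau>0 / 4..2 * \<tau>0} \<Longrightarrow>
      0 \<le> angular_factor k \<tau> t \<and> angular_factor k \<tau> t \<le> K * (a t)\<^sup>2"
    using angular_factor_bounded_near[OF assms] by blast
  have "open {p :: real \<times> real. \<bar>snd p\<bar> < \<tau>0 / 2 \<and> 3 * \<tau>0 / 4 < fst p \<and> fst p < 2 * \<tau>0}"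
    by (intro open_Collect_conj open_Collect_less continuous_intros)
  then have "\<forall>\<^sub>F p in nhds (\<tau>0, 0). p \<in> {p. \<bar>snd p\<bar> < \<tau>0 / 2 \<and> 3 * \<tau>0 / 4 < fst p \<and> fst p < 2 * \<tau>0}"
    using assms by (intro eventually_nhds_in_open) auto
  then have near: "\<forall>\<^sub>F p in at (\<tau>0, 0) within X.
      0 \<le> angular_factor k (fst p) (snd p) \<and> angular_factor k (fst p) (snd p) \<le> K * (a (snd p))\<^sup>2"
    unfolding eventually_at_filter by (rule eventually_mono) (use K in auto)
  have "(snd \<longlongrightarrow> 0) (at (\<tau>0, 0) within X)"
    using tendsto_snd[OF tendsto_ident_at[of "(\<tau>0, 0 :: real)" X]] by simp
  then have "((\<lambda>p. K * (a (snd p))\<^sup>2) \<longlongrightarrow> K * (a 0)\<^sup>2) (at (\<tau>0, 0) within X)"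
    by (intro tendsto_mult tendsto_const tendsto_power tendsto_scale)
  then have upper: "((\<lambda>p. K * (a (snd p))\<^sup>2) \<longlongrightarrow> 0) (at (\<tau>0, 0) within X)" by simp
  have "\<forall>\<^sub>F p in at (\<tau>0, 0) within X. 0 \<le> angular_factor k (fst p) (snd p)"
    "\<forall>\<^sub>F p in at (\<tau>0, 0) within X. angular_factor k (fst p) (snd p) \<le> K * (a (snd p))\<^sup>2"
    using near by (simp_all add: eventually_conj_iff)
  then show ?thesis by (rule tendsto_sandwich[OF _ _ tendsto_const upper])
qed

lemma continuous_on_angular_factor:
  "continuous_on open_wedge (\<lambda>p. angular_factor k (fst p) (snd p))"
proof (rule continuous_on_eq_continuous_within[THEN iffD2], rule ballI)
  fix p assume "p \<in> open_wedge"
  then obtain \<tau> t where p: "p = (\<tau>, t)" "0 < \<tau>" "\<bar>t\<bar> < \<tau>" by (auto simp: open_wedge_def)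
  show "continuous (at p within open_wedge) (\<lambda>p. angular_factor k (fst p) (snd p))"
  proof (cases "t = 0")
    case True
    then show ?thesis
      using angular_factor_tendsto_zero[OF p(2)]
      by (simp add: continuous_within p angular_factor_def)
  next
    case False
    have "{(\<tau>, s :: real). 0 < s \<and> s < \<tau>} = {q. 0 < snd q} \<inter> {q. snd q < fst q}" by auto
    then have "open {(\<tau>, s :: real). 0 < s \<and> s < \<tau>}"
      by (simp add: open_Int open_Collect_less continuous_intros)
    then have "isCont (\<lambda>q. chi a (snd q) (fst q)) (\<tau>, \<bar>t\<bar>)"
      using continuous_on_chi False p by (simp add: continuous_on_eq_continuous_at)
    moreover have "isCont (\<lambda>p. (fst p, \<bar>snd p\<bar>)) p" by (intro continuous_intros)
    ultimately have "isCont (\<lambda>p. chi a \<bar>snd p\<bar> (fst p)) p"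
      using isCont_o2[where f="\<lambda>p. (fst p, \<bar>snd p\<bar>)" and g="\<lambda>q. chi a (snd q) (fst q)"] p by simp
    then have "isCont (\<lambda>p. angular_factor k (fst p) (snd p)) p"
      unfolding angular_factor_def
      by (intro continuous_intros isCont_o2[OF _ isCont_scale] isCont_o2[OF _ isCont_S])
    then show ?thesis by (rule continuous_at_imp_continuous_within)
  qed
qed

lemma continuous_on_g_thth: "continuous_on rho_domain (\<lambda>p. g_thth k a (fst p) (snd p))"
proof -
  have "continuous_on rho_domain (\<lambda>p. (fst p, tzero a (fst p) (snd p)))"
    by (intro continuous_intros continuous_on_tzero)
  moreover have "(\<lambda>p. (fst p, tzero a (fst p) (snd p))) ` rho_domain \<subseteq> open_wedge"
    using tzero_in_domain by (auto simp: rho_domain_def open_wedge_def)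
  ultimately have
    "continuous_on rho_domain (\<lambda>p. angular_factor k (fst p) (tzero a (fst p) (snd p)))"
    using continuous_on_compose2[OF continuous_on_angular_factor] by fastforce
  then show ?thesis
    by (rule continuous_on_eq) (auto simp: g_thth_eq_angular_factor)
qed

end

theorem theorem7p1:
  fixes k :: int and a :: "real \<Rightarrow> real" and th0 ph0 :: real
  assumes "k \<in> {-1, 0, 1}"
    and "regular_scale_factor a"
    and "\<And>t. a (- t) = a t"
    and "\<And>\<tau>. \<tau> > 0 \<Longrightarrow> (\<lambda>t. 1 / a t) integrable_on {0..\<tau>}"
  shows "(\<forall>\<tau>0>0. ((\<lambda>(\<tau>, t0). (a t0)\<^sup>2 * (S k (chi a \<bar>t0\<bar> \<tau>))\<^sup>2) \<longlongrightarrow> 0)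
             (at (\<tau>0, 0) within {(\<tau>, t0). 0 < \<bar>t0\<bar> \<and> \<bar>t0\<bar> < \<tau>}))
       \<and> continuous_on (D_polar a th0 ph0) (\<lambda>(\<tau>, \<rho>, \<theta>, \<phi>). g_thth k a \<tau> \<rho>)
       \<and> continuous_on (D_polar a th0 ph0) (\<lambda>(\<tau>, \<rho>, \<theta>, \<phi>). g_phph k a \<tau> \<rho> \<theta>)
       \<and> (\<forall>\<tau>>0. g_thth k a \<tau> (rhoM a \<tau>) = 0 \<and> (\<forall>\<theta>. g_phph k a \<tau> (rhoM a \<tau>) \<theta> = 0))"
proof -
  interpret finite_horizon a using assms(2-4) by unfold_locales
  have "((\<lambda>(\<tau>, t0). (a t0)\<^sup>2 * (S k (chi a \<bar>t0\<bar> \<tau>))\<^sup>2) \<longlongrightarrow> 0) (at (\<tau>0, 0) within X)"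
    if "0 < \<tau>0" for \<tau>0 X
  proof -
    have "(\<lambda>(\<tau>, t0). (a t0)\<^sup>2 * (S k (chi a \<bar>t0\<bar> \<tau>))\<^sup>2) = (\<lambda>p. angular_factor k (fst p) (snd p))"
      by (auto simp: fun_eq_iff angular_factor_def)
    then show ?thesis using angular_factor_tendsto_zero[OF that] by simp
  qed
  moreover have g_thth: "continuous_on (D_polar a th0 ph0) (\<lambda>x. g_thth k a (fst x) (fst (snd x)))"
    using continuous_on_compose2[OF continuous_on_g_thth _ D_polar_subset_rho_domain]
    by (simp add: continuous_intros)
  moreover have "continuous_on (D_polar a th0 ph0)
      (\<lambda>x. g_thth k a (fst x) (fst (snd x)) * (sin (fst (snd (snd x))))\<^sup>2)"
    by (intro continuous_intros g_thth)
  ultimately show ?thesis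
    by (simp add: case_prod_beta g_phph_def g_thth_def)
qed

end
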